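(* Let $d\ge2$, $\Lambda>1$, $a\in C^1(\mathbb{T}^d;[1,\Lambda])$ and $F\in\mathbb{R}$. Let $E^*,E_*\subset\mathbb{R}^d$ be open sets such that $\overline{E_*}\subset E^*$ and $\overline{\mathbb{R}^d\setminus\overline{E^*}}=\mathbb{R}^d\setminus E^*$. Define $\overline v=\mathbf{1}_{E^*}$ (lower semicontinuous) and $\underline v=\mathbf{1}_{\overline{E_*}}$ (upper semicontinuous). If $\overline v$ is a viscosity supersolution and $\underline v$ a viscosity subsolution of $$-a(x)\,\mathrm{tr}\big((\mathrm{Id}-\widehat{Du}\otimes\widehat{Du})D^2u\big)-Da(x)\cdot Du-F\|Du\|=0\quad\text{in }\mathbb{R}^d,$$ then there is an open set $E\subset\mathbb{R}^d$ with $E_*\subset E\subset E^*$ such that $\mathbf{1}_E$ is a discontinuous viscosity solution of this equation.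
   Context: $\widehat p=p/|p|$; $a$ is $\mathbb{Z}^d$-periodic. Viscosity sub/supersolutions of this geometric equation are defined in the standard way using the semicontinuous envelopes of the operator at $Du=0$. A discontinuous viscosity solution is a function whose upper semicontinuous envelope is a subsolution and whose lower semicontinuous envelope is a supersolution. *)

theory Defs
  imports "HOL-Analysis.Analysis"
begin

text \<open>Space R^d is represented by real^'n (d = CARD('n)); symmetric-matrix arguments
  of the operator by real^'n^'n; the gradient hat p = p/|p| is sgn p.\<close>

definition geomG :: "(real^'n \<Rightarrow> real) \<Rightarrow> (real^'n \<Rightarrow> real^'n) \<Rightarrow> real
    \<Rightarrow> real^'n \<Rightarrow> real^'n \<Rightarrow> real^'n^'n \<Rightarrow> real" where
  "geomG a Da F x p X =
     - a x * (trace X - sgn p \<bullet> (X *v sgn p)) - Da x \<bullet> p - F * norm p"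

text \<open>Lower and upper semicontinuous envelopes of the operator (relevant at p = 0).\<close>
definition geomG_lower :: "(real^'n \<Rightarrow> real) \<Rightarrow> (real^'n \<Rightarrow> real^'n) \<Rightarrow> real
    \<Rightarrow> real^'n \<Rightarrow> real^'n \<Rightarrow> real^'n^'n \<Rightarrow> ereal" where
  "geomG_lower a Da F x p X =
     Liminf (at (x, p, X) within {(y, q, Y). q \<noteq> 0}) (\<lambda>(y, q, Y). ereal (geomG a Da F y q Y))"

definition geomG_upper :: "(real^'n \<Rightarrow> real) \<Rightarrow> (real^'n \<Rightarrow> real^'n) \<Rightarrow> real
    \<Rightarrow> real^'n \<Rightarrow> real^'n \<Rightarrow> real^'n^'n \<Rightarrow> ereal" where
  "geomG_upper a Da F x p X =
     Limsup (at (x, p, X) within {(y, q, Y). q \<noteq> 0}) (\<lambda>(y, q, Y). ereal (geomG a Da F y q Y))"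

definition C2_test :: "(real^'n \<Rightarrow> real) \<Rightarrow> (real^'n \<Rightarrow> real^'n) \<Rightarrow> (real^'n \<Rightarrow> real^'n^'n) \<Rightarrow> bool" where
  "C2_test \<phi> D\<phi> H\<phi> \<longleftrightarrow>
     (\<forall>x. (\<phi> has_derivative (\<lambda>h. D\<phi> x \<bullet> h)) (at x)) \<and>
     (\<forall>x. (D\<phi> has_derivative (\<lambda>h. H\<phi> x *v h)) (at x)) \<and>
     continuous_on UNIV H\<phi>"

definition usc :: "('a::topological_space \<Rightarrow> real) \<Rightarrow> bool" where
  "usc u \<longleftrightarrow> (\<forall>x t. u x < t \<longrightarrow> eventually (\<lambda>y. u y < t) (at x))"

definition lsc :: "('a::topological_space \<Rightarrow> real) \<Rightarrow> bool" where
  "lsc u \<longleftrightarrow> (\<forall>x t. t < u x \<longrightarrow> eventually (\<lambda>y. t < u y) (at x))"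

definition visc_sub :: "(real^'n \<Rightarrow> real) \<Rightarrow> (real^'n \<Rightarrow> real^'n) \<Rightarrow> real
    \<Rightarrow> (real^'n \<Rightarrow> real) \<Rightarrow> bool" where
  "visc_sub a Da F u \<longleftrightarrow> usc u \<and>
     (\<forall>\<phi> D\<phi> H\<phi> x0. C2_test \<phi> D\<phi> H\<phi> \<and>
        (\<exists>r>0. \<forall>y\<in>ball x0 r. u y - \<phi> y \<le> u x0 - \<phi> x0)
        \<longrightarrow> geomG_lower a Da F x0 (D\<phi> x0) (H\<phi> x0) \<le> 0)"

definition visc_super :: "(real^'n \<Rightarrow> real) \<Rightarrow> (real^'n \<Rightarrow> real^'n) \<Rightarrow> real
    \<Rightarrow> (real^'n \<Rightarrow> real) \<Rightarrow> bool" where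
  "visc_super a Da F u \<longleftrightarrow> lsc u \<and>
     (\<forall>\<phi> D\<phi> H\<phi> x0. C2_test \<phi> D\<phi> H\<phi> \<and>
        (\<exists>r>0. \<forall>y\<in>ball x0 r. u y - \<phi> y \<ge> u x0 - \<phi> x0)
        \<longrightarrow> geomG_upper a Da F x0 (D\<phi> x0) (H\<phi> x0) \<ge> 0)"

definition usc_env :: "('a::topological_space \<Rightarrow> real) \<Rightarrow> 'a \<Rightarrow> real" where
  "usc_env u x = real_of_ereal (Limsup (nhds x) (\<lambda>y. ereal (u y)))"

definition lsc_env :: "('a::topological_space \<Rightarrow> real) \<Rightarrow> 'a \<Rightarrow> real" where
  "lsc_env u x = real_of_ereal (Liminf (nhds x) (\<lambda>y. ereal (u y)))"

definition visc_solution_disc :: "(real^'n \<Rightarrow> real) \<Rightarrow> (real^'n \<Rightarrow> real^'n) \<Rightarrow> real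
    \<Rightarrow> (real^'n \<Rightarrow> real) \<Rightarrow> bool" where
  "visc_solution_disc a Da F u \<longleftrightarrow>
     visc_sub a Da F (usc_env u) \<and> visc_super a Da F (lsc_env u)"

definition Zd_periodic :: "(real^'n \<Rightarrow> real) \<Rightarrow> bool" where
  "Zd_periodic f \<longleftrightarrow> (\<forall>x k. (\<forall>i. k $ i \<in> \<int>) \<longrightarrow> f (x + k) = f x)"

end

theory Submission
  imports Defs
begin

(* Perron's method. Let E be the union of all open G with Elow \<subseteq> G \<subseteq> Eup whose closure has a
   subsolution as indicator. Such subsolutions are stable under unions: a test function touching
   the closure of the union from above at z is perturbed into a strict minimum, which is then
   approximated by minima over the closures of single members, and the lower envelope of the
   operator is lower semicontinuous. Hence E is the largest set of this kind. If its indicator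
   failed to be a supersolution at some x0 \<in> Eup - E, the touching test function would yield a
   quadratic q with q x0 = 0 and a strict subsolution inequality for its level sets near x0; the
   patch {q > -\<delta>} near x0 could then be added to E while keeping the subsolution property,
   contradicting maximality. At points of E or outside Eup the test is inherited from Eup. *)

section \<open>Semicontinuous envelopes\<close>

lemma usc_indicator_closed: "closed S \<Longrightarrow> usc (indicator S :: 'a::topological_space \<Rightarrow> real)"
  unfolding usc_def
proof (intro allI impI)
  fix x t assume S: "closed S" and xt: "indicator S x < (t::real)"
  show "\<forall>\<^sub>F y in at x. indicator S y < t"
  proof (cases "x \<in> S")
    case True
    then show ?thesis using xt by (intro always_eventually) (simp add: indicator_def)
  next
    case False
    then have "\<forall>\<^sub>F y in at x. y \<in> - S" using S by (intro eventually_at_in_open') auto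
    then show ?thesis by (rule eventually_mono) (use xt False in auto)
  qed
qed

lemma lsc_indicator_open: "open S \<Longrightarrow> lsc (indicator S :: 'a::topological_space \<Rightarrow> real)"
  unfolding lsc_def
proof (intro allI impI)
  fix x t assume S: "open S" and xt: "(t::real) < indicator S x"
  show "\<forall>\<^sub>F y in at x. t < indicator S y"
  proof (cases "x \<in> S")
    case False
    then show ?thesis using xt by (intro always_eventually) (simp add: indicator_def)
  next
    case True
    then have "\<forall>\<^sub>F y in at x. y \<in> S" using S by (intro eventually_at_in_open') auto
    then show ?thesis by (rule eventually_mono) (use xt True in auto)
  qed
qed

lemma usc_env_indicator: "usc_env (indicator E :: 'a::topological_space \<Rightarrow> real) = indicator (closure E)"
proof
  fix x :: 'a
  let ?L = "Limsup (nhds x) (\<lambda>y. ereal (indicator E y))"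
  show "usc_env (indicator E) x = indicator (closure E) x"
  proof (cases "x \<in> closure E")
    case False
    then have "\<forall>\<^sub>F y in nhds x. y \<in> - closure E"
      by (intro eventually_nhds_in_open) auto
    then have "\<forall>\<^sub>F y in nhds x. ereal (indicator E y) = 0"
      by (rule eventually_mono) (use closure_subset in \<open>auto simp: indicator_def\<close>)
    then have "?L = 0"
      by (intro lim_imp_Limsup) (auto intro: tendsto_eventually)
    then show ?thesis using False by (simp add: usc_env_def)
  next
    case True
    have "?L \<le> 1"
      by (rule Limsup_bounded) (auto simp: indicator_def)
    moreover have "\<not> ?L < 1"
    proof
      assume "?L < 1"
      then have "\<forall>\<^sub>F y in nhds x. y \<notin> E"
        by (rule eventually_mono[OF Limsup_lessD]) (auto simp: indicator_def)
      then obtain S where "open S" "x \<in> S" "S \<inter> E = {}"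
        unfolding eventually_nhds by blast
      with True show False by (metis disjoint_iff open_Int_closure_eq_empty)
    qed
    ultimately have "?L = 1" by simp
    then show ?thesis using True by (simp add: usc_env_def)
  qed
qed

lemma lsc_env_indicator_open:
  assumes "open E"
  shows "lsc_env (indicator E :: 'a::topological_space \<Rightarrow> real) = indicator E"
proof
  fix x :: 'a
  let ?L = "Liminf (nhds x) (\<lambda>y. ereal (indicator E y))"
  show "lsc_env (indicator E) x = indicator E x"
  proof (cases "x \<in> E")
    case True
    then have "\<forall>\<^sub>F y in nhds x. ereal (indicator E y) = 1"
      by (rule eventually_mono[OF eventually_nhds_in_open[OF assms]]) (auto simp: indicator_def)
    then have "?L = 1"
      by (intro lim_imp_Liminf) (auto intro: tendsto_eventually)
    then show ?thesis using True by (simp add: lsc_env_def)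
  next
    case False
    have "0 \<le> ?L"
      by (rule Liminf_bounded) (auto simp: indicator_def)
    moreover have "\<not> 0 < ?L"
    proof
      assume "0 < ?L"
      then have "0 < ereal (indicator E x)"
        by (rule eventually_nhds_x_imp_x[OF less_LiminfD])
      with False show False by simp
    qed
    ultimately have "?L = 0" by simp
    then show ?thesis using False by (simp add: lsc_env_def)
  qed
qed

lemma closed_Liminf_at_within_le:
  fixes f :: "'a::t1_space \<Rightarrow> 'b::{complete_linorder, dense_linorder}"
  shows "closed {x. Liminf (at x within S) f \<le> c}"
  unfolding closed_def open_subopen[of "- _"]
proof (intro ballI)
  fix x0 assume "x0 \<in> - {x. Liminf (at x within S) f \<le> c}"
  then obtain y where y: "c < y" "y < Liminf (at x0 within S) f"
    using dense by (auto simp: not_le)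
  obtain U where U: "open U" "x0 \<in> U" "\<forall>x\<in>U. x \<noteq> x0 \<longrightarrow> x \<in> S \<longrightarrow> y < f x"
    using less_LiminfD[OF y(2)] unfolding eventually_at_topological by blast
  have "y \<le> Liminf (at x within S) f" if "x \<in> U" for x
  proof (cases "x = x0")
    case False
    have "\<forall>\<^sub>F z in at x within S. y < f z"
      unfolding eventually_at_topological
      by (rule exI[of _ "U - {x0}"]) (use U that False in auto)
    then show ?thesis
      unfolding le_Liminf_iff by (auto elim: eventually_mono)
  qed (use y in simp)
  then show "\<exists>T. open T \<and> x0 \<in> T \<and> T \<subseteq> - {x. Liminf (at x within S) f \<le> c}"
    using U y by (intro exI[of _ U]) (auto dest: order.strict_trans1)
qed

lemma closed_geomG_lower_le:
  "closed {(x, p, X). geomG_lower a Da F x p X \<le> c}"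
proof -
  have "{(x, p, X). geomG_lower a Da F x p X \<le> c} =
    {w. Liminf (at w within {(y, q, Y). q \<noteq> 0}) (\<lambda>(y, q, Y). ereal (geomG a Da F y q Y)) \<le> c}"
    by (auto simp: geomG_lower_def)
  then show ?thesis by (simp only: closed_Liminf_at_within_le)
qed

lemma Liminf_le_of_tendsto_along:
  fixes f :: "'a \<Rightarrow> 'b::{complete_linorder, dense_linorder, linorder_topology}"
  assumes "filterlim s G F" and "F \<noteq> bot" and "((\<lambda>x. f (s x)) \<longlongrightarrow> l) F"
  shows "Liminf G f \<le> l"
proof (rule ccontr)
  assume "\<not> Liminf G f \<le> l"
  then obtain y where "l < y" "y < Liminf G f"
    using dense by (auto simp: not_le)
  have "\<forall>\<^sub>F x in F. y < f (s x)"
    using eventually_compose_filterlim[OF less_LiminfD[OF \<open>y < Liminf G f\<close>] assms(1)] .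
  moreover have "\<forall>\<^sub>F x in F. f (s x) < y"
    using order_tendstoD(2)[OF assms(3) \<open>l < y\<close>] .
  ultimately have "\<forall>\<^sub>F x in F. False"
    by eventually_elim simp
  with assms(2) show False by simp
qed

lemma geomG_lower_le_ray:
  fixes P :: "real^'n" and H :: "real^'n^'n"
  assumes "P \<noteq> 0" and "0 \<le> \<mu>"
  shows "geomG_lower a Da F z (\<mu> *\<^sub>R P) H \<le>
    ereal (- a z * (trace H - sgn P \<bullet> (H *v sgn P)) - \<mu> * (Da z \<bullet> P + F * norm P))"
proof -
  let ?L = "\<lambda>c. - a z * (trace H - sgn P \<bullet> (H *v sgn P)) - (\<mu> + c) * (Da z \<bullet> P + F * norm P)"
  define s where "s c = (z, (\<mu> + c) *\<^sub>R P, H)" for c :: real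
  have ray: "geomG a Da F z ((\<mu> + c) *\<^sub>R P) H = ?L c" if "0 < c" for c
  proof -
    have "0 < \<mu> + c" using that \<open>0 \<le> \<mu>\<close> by simp
    then have "sgn ((\<mu> + c) *\<^sub>R P) = sgn P" "norm ((\<mu> + c) *\<^sub>R P) = (\<mu> + c) * norm P"
      by (simp_all add: sgn_scaleR)
    then show ?thesis
      by (simp only: geomG_def inner_scaleR_right) (simp add: algebra_simps)
  qed
  have "\<forall>\<^sub>F c in at_right 0. (\<lambda>(y, q, Y). ereal (geomG a Da F y q Y)) (s c) = ereal (?L c)"
    by (rule eventually_mono[OF eventually_at_right_less]) (simp add: s_def ray)
  moreover have "((\<lambda>c. ereal (?L c)) \<longlongrightarrow> ereal (?L 0)) (at_right 0)"
    by (intro lim_ereal[THEN iffD2] tendsto_intros)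
  ultimately have lim: "((\<lambda>c. (\<lambda>(y, q, Y). ereal (geomG a Da F y q Y)) (s c)) \<longlongrightarrow> ereal (?L 0)) (at_right 0)"
    using tendsto_cong by force
  have "filterlim s (at (z, \<mu> *\<^sub>R P, H) within {(y, q, Y). q \<noteq> 0}) (at_right 0)"
    unfolding filterlim_at
  proof
    show "\<forall>\<^sub>F c in at_right 0. s c \<in> {(y, q, Y). q \<noteq> 0} \<and> s c \<noteq> (z, \<mu> *\<^sub>R P, H)"
      by (rule eventually_mono[OF eventually_at_right_less])
        (use assms in \<open>auto simp: s_def\<close>)
    show "(s \<longlongrightarrow> (z, \<mu> *\<^sub>R P, H)) (at_right 0)"
      unfolding s_def by (auto intro!: tendsto_eq_intros)
  qed
  from Liminf_le_of_tendsto_along[OF this _ lim] show ?thesis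
    by (simp add: geomG_lower_def)
qed

section \<open>One-sided optimality conditions for test functions\<close>

lemma right_min_deriv_nonneg:
  fixes g :: "real \<Rightarrow> real"
  assumes "(g has_real_derivative g') (at 0)"
    and "\<forall>\<^sub>F t in at_right 0. g 0 \<le> g t"
  shows "0 \<le> g'"
proof (rule tendsto_lowerbound)
  show "((\<lambda>t. (g t - g 0) / (t - 0)) \<longlongrightarrow> g') (at_right 0)"
    using has_field_derivative_at_within[OF assms(1)] by (simp only: has_field_derivative_iff)
  show "\<forall>\<^sub>F t in at_right 0. 0 \<le> (g t - g 0) / (t - 0)"
    using assms(2) eventually_at_right_less by eventually_elim simp
qed simp

lemma right_min_second_deriv_nonneg:
  fixes g :: "real \<Rightarrow> real"
  assumes g': "\<And>t. (g has_real_derivative g' t) (at t)"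
    and g'0: "g' 0 = 0"
    and g'': "(g' has_real_derivative g'') (at 0)"
    and min: "\<forall>\<^sub>F t in at_right 0. g 0 \<le> g t"
  shows "0 \<le> g''"
proof (rule ccontr)
  assume "\<not> 0 \<le> g''"
  then obtain d where "0 < d" and dec: "\<And>h. 0 < h \<Longrightarrow> h < d \<Longrightarrow> g' h < 0"
    using DERIV_neg_dec_right[OF g''] g'0 by fastforce
  have "g t < g 0" if "0 < t" "t < d" for t
  proof -
    obtain s where "0 < s" "s < t" "g t - g 0 = (t - 0) * g' s"
      using MVT2[of 0 t g g'] g' \<open>0 < t\<close> by blast
    with dec[of s] mult_pos_neg[of t "g' s"] that show ?thesis by simp
  qed
  then have "\<forall>\<^sub>F t in at_right 0. g t < g 0"
    using \<open>0 < d\<close> unfolding eventually_at_right_field by blast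
  with min have "\<forall>\<^sub>F t in at_right (0::real). False"
    by eventually_elim simp
  then show False by simp
qed

lemma C2_test_has_derivative_parabola:
  assumes "C2_test \<eta> D\<eta> H\<eta>"
  shows "((\<lambda>t. \<eta> (z + t *\<^sub>R v + t\<^sup>2 *\<^sub>R w)) has_real_derivative
           D\<eta> (z + t *\<^sub>R v + t\<^sup>2 *\<^sub>R w) \<bullet> (v + (2 * t) *\<^sub>R w)) (at t)"
proof -
  let ?\<gamma> = "\<lambda>t. z + t *\<^sub>R v + t\<^sup>2 *\<^sub>R w"
  have "(?\<gamma> has_derivative (\<lambda>s. s *\<^sub>R (v + (2 * t) *\<^sub>R w))) (at t)"
    by (auto intro!: derivative_eq_intros simp: algebra_simps)
  moreover have "(\<eta> has_derivative (\<lambda>h. D\<eta> (?\<gamma> t) \<bullet> h)) (at (?\<gamma> t))"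
    using assms by (simp add: C2_test_def)
  ultimately show ?thesis
    unfolding has_field_derivative_def
    by (rule has_derivative_eq_rhs[OF has_derivative_compose]) (simp add: fun_eq_iff mult.commute)
qed

lemma C2_test_has_second_derivative_parabola:
  assumes "C2_test \<eta> D\<eta> H\<eta>"
  shows "((\<lambda>t. D\<eta> (z + t *\<^sub>R v + t\<^sup>2 *\<^sub>R w) \<bullet> (v + (2 * t) *\<^sub>R w)) has_real_derivative
           v \<bullet> (H\<eta> z *v v) + 2 * (D\<eta> z \<bullet> w)) (at 0)"
proof -
  let ?\<gamma> = "\<lambda>t. z + t *\<^sub>R v + t\<^sup>2 *\<^sub>R w"
  have "(?\<gamma> has_derivative (\<lambda>s. s *\<^sub>R v)) (at 0)"
    by (auto intro!: derivative_eq_intros)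
  moreover have "(D\<eta> has_derivative (\<lambda>h. H\<eta> (?\<gamma> 0) *v h)) (at (?\<gamma> 0))"
    using assms by (simp add: C2_test_def)
  ultimately have "((\<lambda>t. D\<eta> (?\<gamma> t)) has_derivative (\<lambda>s. H\<eta> z *v (s *\<^sub>R v))) (at 0)"
    using has_derivative_compose by fastforce
  moreover have "((\<lambda>t::real. v + (2 * t) *\<^sub>R w) has_derivative (\<lambda>s. s *\<^sub>R (2 *\<^sub>R w))) (at 0)"
    by (auto intro!: derivative_eq_intros simp: algebra_simps)
  ultimately show ?thesis
    unfolding has_field_derivative_def
    by (rule has_derivative_eq_rhs[OF has_derivative_inner])
       (simp add: fun_eq_iff algebra_simps inner_commute)
qed

lemma C2_test_right_min_second_order:
  assumes "C2_test \<eta> D\<eta> H\<eta>" and "D\<eta> z \<bullet> v = 0"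
    and "\<forall>\<^sub>F t in at_right 0. \<eta> z \<le> \<eta> (z + t *\<^sub>R v + t\<^sup>2 *\<^sub>R w)"
  shows "0 \<le> v \<bullet> (H\<eta> z *v v) + 2 * (D\<eta> z \<bullet> w)"
  using assms
  by (intro right_min_second_deriv_nonneg[where g = "\<lambda>t. \<eta> (z + t *\<^sub>R v + t\<^sup>2 *\<^sub>R w)"
        and g' = "\<lambda>t. D\<eta> (z + t *\<^sub>R v + t\<^sup>2 *\<^sub>R w) \<bullet> (v + (2 * t) *\<^sub>R w)"]
      C2_test_has_derivative_parabola C2_test_has_second_derivative_parabola) simp_all

lemma C2_test_right_min_first_order:
  assumes "C2_test \<eta> D\<eta> H\<eta>" and "\<forall>\<^sub>F t in at_right 0. \<eta> z \<le> \<eta> (z + t *\<^sub>R v)"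
  shows "0 \<le> D\<eta> z \<bullet> v"
  using assms C2_test_has_derivative_parabola[OF assms(1), of z v 0 0]
  by (intro right_min_deriv_nonneg[where g = "\<lambda>t. \<eta> (z + t *\<^sub>R v)"]) simp_all

lemma C2_test_taylor2:
  assumes C2: "C2_test \<phi> D\<phi> H\<phi>" and e: "0 < e"
  shows "\<forall>\<^sub>F y in nhds x.
    \<bar>\<phi> y - \<phi> x - D\<phi> x \<bullet> (y - x) - 1/2 * ((y - x) \<bullet> (H\<phi> x *v (y - x)))\<bar> \<le> e * (norm (y - x))\<^sup>2"
proof -
  have "(D\<phi> has_derivative (\<lambda>h. H\<phi> x *v h)) (at x)" using C2 by (simp add: C2_test_def)
  then obtain \<rho> where "0 < \<rho>" and \<rho>:
    "\<And>y. norm (y - x) < \<rho> \<Longrightarrow> norm (D\<phi> y - D\<phi> x - H\<phi> x *v (y - x)) \<le> e * norm (y - x)"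
    unfolding has_derivative_at_alt using e by blast
  have "\<bar>\<phi> (x + h) - \<phi> x - D\<phi> x \<bullet> h - 1/2 * (h \<bullet> (H\<phi> x *v h))\<bar> \<le> e * (norm h)\<^sup>2"
    if h: "norm h < \<rho>" for h
  proof -
    define R where "R t = \<phi> (x + t *\<^sub>R h + t\<^sup>2 *\<^sub>R 0) - t * (D\<phi> x \<bullet> h) - 1/2 * t\<^sup>2 * (h \<bullet> (H\<phi> x *v h))" for t
    define R' where "R' t = D\<phi> (x + t *\<^sub>R h + t\<^sup>2 *\<^sub>R 0) \<bullet> (h + (2 * t) *\<^sub>R 0) - D\<phi> x \<bullet> h - t * (h \<bullet> (H\<phi> x *v h))" for t
    have "(R has_real_derivative R' t) (at t)" for t
      unfolding R_def R'_def
      by (rule derivative_eq_intros C2_test_has_derivative_parabola[OF C2] | simp)+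
    then obtain s where s: "0 < s" "s < 1" "R 1 - R 0 = (1 - 0) * R' s"
      using MVT2[of 0 1 R R'] by auto
    have "R' s = (D\<phi> (x + s *\<^sub>R h) - D\<phi> x - H\<phi> x *v (s *\<^sub>R h)) \<bullet> h"
      by (simp add: R'_def algebra_simps inner_commute)
    then have "\<bar>R' s\<bar> \<le> norm (D\<phi> (x + s *\<^sub>R h) - D\<phi> x - H\<phi> x *v (s *\<^sub>R h)) * norm h"
      using Cauchy_Schwarz_ineq2 by simp
    also have "\<dots> \<le> e * norm (s *\<^sub>R h) * norm h"
    proof (intro mult_right_mono)
      have "s * norm h < \<rho>"
        using s h mult_left_le_one_le[of "norm h" s] by simp
      then show "norm (D\<phi> (x + s *\<^sub>R h) - D\<phi> x - H\<phi> x *v (s *\<^sub>R h)) \<le> e * norm (s *\<^sub>R h)"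
        using \<rho>[of "x + s *\<^sub>R h"] s by simp
    qed simp
    also have "\<dots> \<le> e * (norm h)\<^sup>2"
      using s e by (simp add: power2_eq_square mult_le_cancel_left mult_left_le_one_le)
    finally show ?thesis
      using s by (simp add: R_def)
  qed
  then show ?thesis
    unfolding eventually_nhds_metric using \<open>0 < \<rho>\<close>
    by (metis add.commute diff_add_cancel dist_norm)
qed

section \<open>Test functions touching superlevel sets of quadratics\<close>

lemma inner_nonneg_on_halfspace_imp_nonneg_multiple:
  fixes P D :: "'a::real_inner"
  assumes "P \<noteq> 0" and halfspace: "\<And>v. 0 < P \<bullet> v \<Longrightarrow> 0 \<le> D \<bullet> v"
  shows "\<exists>\<mu>\<ge>0. D = \<mu> *\<^sub>R P"
proof -
  have nonneg: "0 \<le> D \<bullet> v" if "P \<bullet> v = 0" for v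
  proof (rule tendsto_lowerbound)
    show "((\<lambda>s. D \<bullet> v + s * (D \<bullet> P)) \<longlongrightarrow> D \<bullet> v) (at_right 0)"
      by (auto intro!: tendsto_eq_intros)
    have shifted: "0 \<le> D \<bullet> (v + s *\<^sub>R P)" if "0 < s" for s
      using halfspace[of "v + s *\<^sub>R P"] \<open>P \<bullet> v = 0\<close> \<open>P \<noteq> 0\<close> that
      by (simp add: inner_add_right)
    show "\<forall>\<^sub>F s in at_right 0. 0 \<le> D \<bullet> v + s * (D \<bullet> P)"
      by (rule eventually_mono[OF eventually_at_right_less]) (use shifted in \<open>simp add: inner_add_right\<close>)
  qed simp
  define \<mu> where "\<mu> = (D \<bullet> P) / (P \<bullet> P)"
  have "0 \<le> \<mu>"
    using halfspace[of P] \<open>P \<noteq> 0\<close> by (simp add: \<mu>_def inner_commute)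
  moreover have "D = \<mu> *\<^sub>R P"
  proof -
    define w where "w = D - \<mu> *\<^sub>R P"
    have "P \<bullet> w = 0"
      using \<open>P \<noteq> 0\<close> by (simp add: w_def \<mu>_def inner_diff_right inner_commute)
    then have "D \<bullet> w = 0"
      using nonneg[of w] nonneg[of "- w"] by simp
    then have "w \<bullet> w = 0"
      using \<open>P \<bullet> w = 0\<close> by (simp add: w_def inner_diff_left)
    then show ?thesis by (simp add: w_def)
  qed
  ultimately show ?thesis by blast
qed

lemma trace_eq_sum_projected_axes:
  fixes A :: "real^'n^'n" and u :: "real^'n"
  assumes "u \<bullet> u = 1"
  shows "(\<Sum>i\<in>UNIV. (axis i 1 - u$i *\<^sub>R u) \<bullet> (A *v (axis i 1 - u$i *\<^sub>R u))) = trace A - u \<bullet> (A *v u)"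
proof -
  have col: "u \<bullet> (A *v axis i 1) = (\<Sum>j\<in>UNIV. u$j * A$j$i)" for i
    by (simp add: inner_vec_def matrix_vector_mult_def axis_def if_distrib cong: if_cong)
  have "(\<Sum>i\<in>UNIV. u$i * (\<Sum>j\<in>UNIV. u$j * A$j$i)) = (\<Sum>j\<in>UNIV. \<Sum>i\<in>UNIV. u$j * (A$j$i * u$i))"
    by (subst sum.swap) (simp add: sum_distrib_left algebra_simps)
  also have "\<dots> = u \<bullet> (A *v u)"
    by (simp add: inner_vec_def matrix_vector_mult_def sum_distrib_left)
  finally have cross: "(\<Sum>i\<in>UNIV. u$i * (\<Sum>j\<in>UNIV. u$j * A$j$i)) = u \<bullet> (A *v u)" .
  have "(axis i 1 - u$i *\<^sub>R u) \<bullet> (A *v (axis i 1 - u$i *\<^sub>R u)) =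
      A$i$i - u$i * (A *v u)$i - u$i * (\<Sum>j\<in>UNIV. u$j * A$j$i) + (u$i)\<^sup>2 * (u \<bullet> (A *v u))" for i
    by (simp add: algebra_simps inner_axis' inner_axis matrix_vector_mul_component col power2_eq_square)
  moreover have "(\<Sum>i\<in>UNIV. (u$i)\<^sup>2) = 1"
    using assms by (simp add: inner_vec_def power2_eq_square)
  ultimately show ?thesis
    by (simp add: sum.distrib sum_subtractf sum_distrib_right[symmetric] cross trace_def
        inner_vec_def[of u "A *v u"])
qed

lemma inner_le_trace_if_nonneg_on_orthogonal:
  fixes A :: "real^'n^'n" and u :: "real^'n"
  assumes "u \<bullet> u = 1" and "\<And>v. v \<bullet> u = 0 \<Longrightarrow> 0 \<le> v \<bullet> (A *v v)"
  shows "u \<bullet> (A *v u) \<le> trace A"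
proof -
  have "(axis i 1 - u$i *\<^sub>R u) \<bullet> u = 0" for i
    using assms(1) by (simp add: inner_diff_left inner_axis')
  then have "0 \<le> (\<Sum>i\<in>UNIV. (axis i 1 - u$i *\<^sub>R u) \<bullet> (A *v (axis i 1 - u$i *\<^sub>R u)))"
    by (intro sum_nonneg assms(2))
  then show ?thesis unfolding trace_eq_sum_projected_axes[OF assms(1)] by simp
qed

lemma superlevel_min_gradient:
  fixes q :: "real^'n \<Rightarrow> real"
  assumes C2: "C2_test \<eta> D\<eta> H\<eta>" and "P \<noteq> 0"
    and q: "\<And>k. q (z + k) = q z + P \<bullet> k + 1/2 * (k \<bullet> (M *v k))"
    and min: "\<forall>\<^sub>F y in nhds z. q z < q y \<longrightarrow> \<eta> z \<le> \<eta> y"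
  shows "\<exists>\<mu>\<ge>0. D\<eta> z = \<mu> *\<^sub>R P"
proof (rule inner_nonneg_on_halfspace_imp_nonneg_multiple[OF \<open>P \<noteq> 0\<close>])
  fix v assume "0 < P \<bullet> v"
  have "((\<lambda>t. P \<bullet> v + t / 2 * (v \<bullet> (M *v v))) \<longlongrightarrow> P \<bullet> v) (at_right 0)"
    by (auto intro!: tendsto_eq_intros)
  then have pos: "\<forall>\<^sub>F t in at_right 0. 0 < P \<bullet> v + t / 2 * (v \<bullet> (M *v v))"
    using \<open>0 < P \<bullet> v\<close> by (rule order_tendstoD(1))
  have expand: "q (z + t *\<^sub>R v) = q z + t * (P \<bullet> v + t / 2 * (v \<bullet> (M *v v)))" for t
    by (simp add: q algebra_simps)
  have "\<forall>\<^sub>F t in at_right 0. q z < q (z + t *\<^sub>R v)"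
    using pos eventually_at_right_less[of "0::real"]
    by eventually_elim (simp add: expand zero_less_mult_iff)
  moreover have "((\<lambda>t. z + t *\<^sub>R v) \<longlongrightarrow> z) (at_right 0)"
    by (auto intro!: tendsto_eq_intros)
  note eventually_compose_filterlim[OF min this]
  ultimately have "\<forall>\<^sub>F t in at_right 0. \<eta> z \<le> \<eta> (z + t *\<^sub>R v)"
    by eventually_elim simp
  then show "0 \<le> D\<eta> z \<bullet> v"
    by (rule C2_test_right_min_first_order[OF C2])
qed

lemma superlevel_min_hessian:
  fixes q :: "real^'n \<Rightarrow> real"
  assumes C2: "C2_test \<eta> D\<eta> H\<eta>" and "P \<noteq> 0"
    and q: "\<And>k. q (z + k) = q z + P \<bullet> k + 1/2 * (k \<bullet> (M *v k))"
    and min: "\<forall>\<^sub>F y in nhds z. q z < q y \<longrightarrow> \<eta> z \<le> \<eta> y"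
    and D: "D\<eta> z = \<mu> *\<^sub>R P" and "v \<bullet> P = 0"
  shows "\<mu> * (v \<bullet> (M *v v)) \<le> v \<bullet> (H\<eta> z *v v)"
proof (rule tendsto_upperbound)
  show "((\<lambda>\<epsilon>. \<mu> * (v \<bullet> (M *v v)) - 2 * \<mu> * \<epsilon>) \<longlongrightarrow> \<mu> * (v \<bullet> (M *v v))) (at_right 0)"
    by (auto intro!: tendsto_eq_intros)
  have "\<mu> * (v \<bullet> (M *v v)) - 2 * \<mu> * \<epsilon> \<le> v \<bullet> (H\<eta> z *v v)" if "0 < \<epsilon>" for \<epsilon>
  proof -
    \<comment> \<open>Bend the direction v towards P so that q increases to second order along the curve.\<close>
    define w where "w = ((\<epsilon> - 1/2 * (v \<bullet> (M *v v))) / (P \<bullet> P)) *\<^sub>R P"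
    define B where "B = v \<bullet> (M *v w) + w \<bullet> (M *v v)"
    define C where "C = w \<bullet> (M *v w)"
    have Pw: "P \<bullet> w = \<epsilon> - 1/2 * (v \<bullet> (M *v v))"
      using \<open>P \<noteq> 0\<close> by (simp add: w_def)
    have expand: "q (z + t *\<^sub>R v + t\<^sup>2 *\<^sub>R w) = q z + t\<^sup>2 * (\<epsilon> + t / 2 * B + t\<^sup>2 / 2 * C)" for t
      using q[of "t *\<^sub>R v + t\<^sup>2 *\<^sub>R w"] \<open>v \<bullet> P = 0\<close>
      by (simp add: Pw B_def C_def inner_commute[of P v] algebra_simps power2_eq_square)
    have "((\<lambda>t. \<epsilon> + t / 2 * B + t\<^sup>2 / 2 * C) \<longlongrightarrow> \<epsilon>) (at_right 0)"
      by (auto intro!: tendsto_eq_intros)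
    then have pos: "\<forall>\<^sub>F t in at_right 0. 0 < \<epsilon> + t / 2 * B + t\<^sup>2 / 2 * C"
      using \<open>0 < \<epsilon>\<close> by (rule order_tendstoD(1))
    have "\<forall>\<^sub>F t in at_right 0. q z < q (z + t *\<^sub>R v + t\<^sup>2 *\<^sub>R w)"
      using pos eventually_at_right_less[of "0::real"]
      by eventually_elim (simp add: expand zero_less_mult_iff)
    moreover have "((\<lambda>t. z + t *\<^sub>R v + t\<^sup>2 *\<^sub>R w) \<longlongrightarrow> z) (at_right 0)"
      by (auto intro!: tendsto_eq_intros)
    note eventually_compose_filterlim[OF min this]
    ultimately have "\<forall>\<^sub>F t in at_right 0. \<eta> z \<le> \<eta> (z + t *\<^sub>R v + t\<^sup>2 *\<^sub>R w)"
      by eventually_elim simp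
    then have "0 \<le> v \<bullet> (H\<eta> z *v v) + 2 * (D\<eta> z \<bullet> w)"
      by (rule C2_test_right_min_second_order[OF C2, rotated]) (use D \<open>v \<bullet> P = 0\<close> in \<open>simp add: inner_commute\<close>)
    then show ?thesis
      using D Pw by (simp add: algebra_simps)
  qed
  then show "\<forall>\<^sub>F \<epsilon> in at_right 0. \<mu> * (v \<bullet> (M *v v)) - 2 * \<mu> * \<epsilon> \<le> v \<bullet> (H\<eta> z *v v)"
    by (rule eventually_mono[OF eventually_at_right_less])
qed simp

lemma sgn_inner_sgn:
  fixes P :: "'a::real_inner"
  shows "P \<noteq> 0 \<Longrightarrow> sgn P \<bullet> sgn P = 1"
  by (simp add: sgn_div_norm power2_norm_eq_inner[symmetric] divide_inverse power2_eq_square)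

lemma geomG_lower_nonpos_superlevel_min:
  fixes q :: "real^'n \<Rightarrow> real"
  assumes C2: "C2_test \<eta> D\<eta> H\<eta>" and P: "P \<noteq> 0" and "0 < a z"
    and q: "\<And>k. q (z + k) = q z + P \<bullet> k + 1/2 * (k \<bullet> (M *v k))"
    and min: "\<forall>\<^sub>F y in nhds z. q z < q y \<longrightarrow> \<eta> z \<le> \<eta> y"
    and "geomG a Da F z P M \<le> 0"
  shows "geomG_lower a Da F z (D\<eta> z) (H\<eta> z) \<le> 0"
proof -
  obtain \<mu> where "0 \<le> \<mu>" and D: "D\<eta> z = \<mu> *\<^sub>R P"
    using superlevel_min_gradient[OF C2 P q min] by blast
  let ?u = "sgn P"
  have "?u \<bullet> ((H\<eta> z - \<mu> *\<^sub>R M) *v ?u) \<le> trace (H\<eta> z - \<mu> *\<^sub>R M)"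
  proof (rule inner_le_trace_if_nonneg_on_orthogonal)
    show "?u \<bullet> ?u = 1" using P by (rule sgn_inner_sgn)
    fix v assume "v \<bullet> ?u = 0"
    then have "v \<bullet> P = 0" using P by (simp add: sgn_div_norm)
    then show "0 \<le> v \<bullet> ((H\<eta> z - \<mu> *\<^sub>R M) *v v)"
      using superlevel_min_hessian[OF C2 P q min D]
      by (simp add: matrix_vector_mult_diff_rdistrib inner_diff_right scaleR_matrix_vector_assoc[symmetric])
  qed
  moreover have "trace (\<mu> *\<^sub>R M) = \<mu> * trace M"
    by (simp add: trace_def sum_distrib_left)
  ultimately have tr: "\<mu> * (trace M - ?u \<bullet> (M *v ?u)) \<le> trace (H\<eta> z) - ?u \<bullet> (H\<eta> z *v ?u)"
    by (simp add: trace_sub scaleR_matrix_vector_assoc[symmetric] algebra_simps)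
  have "- a z * (trace (H\<eta> z) - ?u \<bullet> (H\<eta> z *v ?u)) - \<mu> * (Da z \<bullet> P + F * norm P)
      \<le> \<mu> * geomG a Da F z P M"
    using mult_left_mono[OF tr, of "a z"] \<open>0 < a z\<close> by (simp add: geomG_def algebra_simps)
  also have "\<dots> \<le> 0"
    using \<open>0 \<le> \<mu>\<close> \<open>geomG a Da F z P M \<le> 0\<close> by (simp add: mult_nonneg_nonpos)
  finally show ?thesis
    using geomG_lower_le_ray[OF P \<open>0 \<le> \<mu>\<close>, of a Da F z "H\<eta> z"] D by (simp add: order_trans)
qed

lemma geomG_lower_nonpos_local_min:
  fixes \<eta> :: "real^'n \<Rightarrow> real"
  assumes C2: "C2_test \<eta> D\<eta> H\<eta>" and "0 < a z"
    and min: "\<forall>\<^sub>F y in nhds z. \<eta> z \<le> \<eta> y"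
  shows "geomG_lower a Da F z (D\<eta> z) (H\<eta> z) \<le> 0"
proof -
  have "(\<lambda>h. D\<eta> z \<bullet> h) = (\<lambda>h. 0)"
    using C2 min by (intro has_derivative_local_min[of \<eta>])
      (auto simp: C2_test_def eventually_at_filter elim: eventually_mono)
  then have "D\<eta> z = 0"
    by (metis inner_eq_zero_iff)
  have psd: "0 \<le> v \<bullet> (H\<eta> z *v v)" for v
  proof -
    have "((\<lambda>t. z + t *\<^sub>R v + t\<^sup>2 *\<^sub>R 0) \<longlongrightarrow> z) (at_right 0)"
      by (auto intro!: tendsto_eq_intros)
    from eventually_compose_filterlim[OF min this]
    show ?thesis
      using C2_test_right_min_second_order[OF C2, of z v 0] \<open>D\<eta> z = 0\<close> by simp
  qed
  \<comment> \<open>The gradient vanishes, so the ray bound may be taken along any direction.\<close>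
  define P :: "real^'n" where "P = axis undefined 1"
  have "P \<noteq> 0" by (simp add: P_def)
  have "sgn P \<bullet> (H\<eta> z *v sgn P) \<le> trace (H\<eta> z)"
    using psd by (intro inner_le_trace_if_nonneg_on_orthogonal sgn_inner_sgn \<open>P \<noteq> 0\<close>)
  then show ?thesis
    using geomG_lower_le_ray[OF \<open>P \<noteq> 0\<close> order_refl, of a Da F z "H\<eta> z"] \<open>D\<eta> z = 0\<close> \<open>0 < a z\<close>
    by (simp add: order_trans)
qed

section \<open>Subsolutions given by indicators of closed sets\<close>

lemma eventually_nhds_iff_ball:
  fixes z :: "'a::metric_space"
  shows "eventually P (nhds z) \<longleftrightarrow> (\<exists>r>0. \<forall>y\<in>ball z r. P y)"
  unfolding eventually_nhds_metric by (simp add: ball_def dist_commute)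

lemma C2_test_continuous:
  assumes "C2_test \<phi> D\<phi> H\<phi>"
  shows "continuous_on UNIV \<phi>" "continuous_on UNIV D\<phi>" "continuous_on UNIV H\<phi>"
proof -
  from assms have "\<forall>x. isCont \<phi> x" "\<forall>x. isCont D\<phi> x"
    unfolding C2_test_def by (auto intro: has_derivative_continuous)
  then show "continuous_on UNIV \<phi>" "continuous_on UNIV D\<phi>"
    by (auto intro: continuous_at_imp_continuous_on)
  show "continuous_on UNIV H\<phi>"
    using assms by (simp add: C2_test_def)
qed

lemma C2_test_add_sq_dist:
  fixes \<eta> :: "real^'n \<Rightarrow> real"
  assumes "C2_test \<eta> D\<eta> H\<eta>"
  shows "C2_test (\<lambda>y. \<eta> y + \<epsilon> * ((y - z) \<bullet> (y - z))) (\<lambda>y. D\<eta> y + (2 * \<epsilon>) *\<^sub>R (y - z))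
     (\<lambda>y. H\<eta> y + (2 * \<epsilon>) *\<^sub>R mat 1)"
  unfolding C2_test_def
proof (intro conjI allI)
  fix x
  show "((\<lambda>y. \<eta> y + \<epsilon> * ((y - z) \<bullet> (y - z))) has_derivative
      (\<lambda>h. (D\<eta> x + (2 * \<epsilon>) *\<^sub>R (x - z)) \<bullet> h)) (at x)"
    using assms unfolding C2_test_def
    by (auto intro!: derivative_eq_intros simp: algebra_simps inner_commute)
  show "((\<lambda>y. D\<eta> y + (2 * \<epsilon>) *\<^sub>R (y - z)) has_derivative
      (\<lambda>h. (H\<eta> x + (2 * \<epsilon>) *\<^sub>R mat 1) *v h)) (at x)"
    using assms unfolding C2_test_def
    by (auto intro!: derivative_eq_intros simp: algebra_simps scaleR_matrix_vector_assoc[symmetric])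
  show "continuous_on UNIV (\<lambda>y. H\<eta> y + (2 * \<epsilon>) *\<^sub>R mat 1)"
    using C2_test_continuous(3)[OF assms] by (intro continuous_intros)
qed

lemma visc_sub_indicator_closedI:
  fixes C :: "(real^'n) set"
  assumes az: "\<And>x. 0 < a x" and "closed C"
    and inside: "\<And>\<eta> D\<eta> H\<eta> z. C2_test \<eta> D\<eta> H\<eta> \<Longrightarrow> z \<in> C \<Longrightarrow>
      \<forall>\<^sub>F y in nhds z. y \<in> C \<longrightarrow> \<eta> z \<le> \<eta> y \<Longrightarrow> geomG_lower a Da F z (D\<eta> z) (H\<eta> z) \<le> 0"
  shows "visc_sub a Da F (indicator C)"
proof -
  have "geomG_lower a Da F z (D\<eta> z) (H\<eta> z) \<le> 0"
    if C2: "C2_test \<eta> D\<eta> H\<eta>" and max: "\<forall>\<^sub>F y in nhds z. indicator C y - \<eta> y \<le> indicator C z - \<eta> z"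
    for \<eta> :: "real^'n \<Rightarrow> real" and D\<eta> H\<eta> z
  proof (cases "z \<in> C")
    case True
    from max have "\<forall>\<^sub>F y in nhds z. y \<in> C \<longrightarrow> \<eta> z \<le> \<eta> y"
      by (rule eventually_mono) (use True in auto)
    then show ?thesis by (rule inside[OF C2 True])
  next
    case False
    have "\<forall>\<^sub>F y in nhds z. y \<in> - C"
      using False \<open>closed C\<close> by (intro eventually_nhds_in_open) auto
    with max have "\<forall>\<^sub>F y in nhds z. \<eta> z \<le> \<eta> y"
      by eventually_elim (use False in \<open>simp add: indicator_def\<close>)
    then show ?thesis by (rule geomG_lower_nonpos_local_min[OF C2 az])
  qed
  then show ?thesis
    unfolding visc_sub_def eventually_nhds_iff_ball[symmetric]
    using usc_indicator_closed[OF \<open>closed C\<close>] by blast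
qed

lemma visc_sub_indicator_closedD:
  assumes "visc_sub a Da F (indicator C)" and C2: "C2_test \<eta> D\<eta> H\<eta>" and "z \<in> C"
    and min: "\<forall>\<^sub>F y in nhds z. y \<in> C \<longrightarrow> \<eta> z \<le> \<eta> y"
  shows "geomG_lower a Da F z (D\<eta> z) (H\<eta> z) \<le> 0"
proof -
  have "isCont \<eta> z"
    using C2_test_continuous(1)[OF C2] by (simp add: continuous_on_eq_continuous_at)
  then have "\<forall>\<^sub>F y in at z. dist (\<eta> y) (\<eta> z) < 1"
    unfolding isCont_def by (rule tendstoD) simp
  then have "\<forall>\<^sub>F y in nhds z. dist (\<eta> y) (\<eta> z) < 1"
    unfolding eventually_at_filter by (rule eventually_mono) auto
  with min have "\<forall>\<^sub>F y in nhds z. indicator C y - \<eta> y \<le> indicator C z - \<eta> z"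
    by eventually_elim (use \<open>z \<in> C\<close> in \<open>auto simp: indicator_def dist_real_def\<close>)
  with assms(1) C2 show ?thesis
    unfolding visc_sub_def eventually_nhds_iff_ball by blast
qed

lemma eventually_min_if_min_on_cball:
  fixes f :: "'a::metric_space \<Rightarrow> real"
  assumes "y \<in> ball z \<sigma>" and "\<And>w. w \<in> S \<Longrightarrow> w \<in> cball z \<sigma> \<Longrightarrow> f y \<le> f w"
  shows "\<forall>\<^sub>F w in nhds y. w \<in> S \<longrightarrow> f y \<le> f w"
  using eventually_nhds_in_open[OF open_ball assms(1)] by (rule eventually_mono) (use assms(2) in auto)

lemma strict_local_min_approx:
  fixes f :: "'a::heine_borel \<Rightarrow> real"
  assumes cont: "continuous_on UNIV f" and "0 < \<epsilon>"
    and z: "z \<in> closure (\<Union>SS)"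
    and min: "\<forall>\<^sub>F y in nhds z. y \<in> closure (\<Union>SS) \<longrightarrow> f z + \<epsilon> * (dist y z)\<^sup>2 \<le> f y"
  shows "z \<in> closure {y. \<exists>G\<in>SS. y \<in> closure G \<and> (\<forall>\<^sub>F w in nhds y. w \<in> closure G \<longrightarrow> f y \<le> f w)}"
    (is "z \<in> closure ?T")
proof (rule closure_approachable[THEN iffD2], intro allI impI)
  fix e :: real assume "0 < e"
  obtain r where "0 < r" and r: "\<And>y. dist y z < r \<Longrightarrow> y \<in> closure (\<Union>SS) \<Longrightarrow> f z + \<epsilon> * (dist y z)\<^sup>2 \<le> f y"
    using min unfolding eventually_nhds_metric by blast
  define \<sigma> where "\<sigma> = min e r / 2"
  have \<sigma>: "0 < \<sigma>" "\<sigma> < r" "\<sigma> < e" using \<open>0 < e\<close> \<open>0 < r\<close> by (auto simp: \<sigma>_def)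
  have "isCont f z" using cont by (simp add: continuous_on_eq_continuous_at)
  moreover have "0 < \<epsilon> * \<sigma>\<^sup>2" using \<open>0 < \<epsilon>\<close> \<sigma> by simp
  ultimately obtain \<delta> where "0 < \<delta>" and \<delta>: "\<And>y. dist y z < \<delta> \<Longrightarrow> dist (f y) (f z) < \<epsilon> * \<sigma>\<^sup>2"
    unfolding continuous_at_eps_delta by blast
  obtain z' G where "G \<in> SS" "z' \<in> G" "dist z' z < min \<delta> \<sigma>"
    using z \<open>0 < \<delta>\<close> \<sigma> unfolding closure_approachable by (metis UnionE min_less_iff_conj)
  \<comment> \<open>A minimiser of f over the compact set K lies inside the open ball, by the quadratic margin.\<close>
  define K where "K = closure G \<inter> cball z \<sigma>"
  have "compact K" unfolding K_def by (intro closed_Int_compact) auto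
  moreover have "z' \<in> K"
    using \<open>z' \<in> G\<close> \<open>dist z' z < min \<delta> \<sigma>\<close> closure_subset by (auto simp: K_def dist_commute)
  moreover have "continuous_on K f" using cont continuous_on_subset by blast
  ultimately obtain y where "y \<in> K" and y_min: "\<And>w. w \<in> K \<Longrightarrow> f y \<le> f w"
    using continuous_attains_inf[of K f] by blast
  have "dist (f z') (f z) < \<epsilon> * \<sigma>\<^sup>2"
    using \<delta> \<open>dist z' z < min \<delta> \<sigma>\<close> by simp
  then have "f y < f z + \<epsilon> * \<sigma>\<^sup>2"
    using y_min[OF \<open>z' \<in> K\<close>] unfolding dist_real_def by linarith
  moreover have "y \<in> closure (\<Union>SS)"
    using \<open>y \<in> K\<close> \<open>G \<in> SS\<close> closure_mono[of G "\<Union>SS"] by (auto simp: K_def)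
  moreover have "dist y z < r"
    using \<open>y \<in> K\<close> \<sigma> by (simp add: K_def dist_commute)
  ultimately have "\<epsilon> * (dist y z)\<^sup>2 < \<epsilon> * \<sigma>\<^sup>2"
    using r[of y] by simp
  then have "(dist y z)\<^sup>2 < \<sigma>\<^sup>2"
    using \<open>0 < \<epsilon>\<close> mult_less_cancel_left_pos by blast
  then have "dist y z < \<sigma>"
    by (rule power2_less_imp_less) (use \<sigma> in simp)
  then have "\<forall>\<^sub>F w in nhds y. w \<in> closure G \<longrightarrow> f y \<le> f w"
    by (intro eventually_min_if_min_on_cball[of y z \<sigma>] y_min) (auto simp: K_def dist_commute)
  then have "y \<in> ?T"
    using \<open>G \<in> SS\<close> \<open>y \<in> K\<close> by (auto simp: K_def)
  with \<open>dist y z < \<sigma>\<close> \<sigma> show "\<exists>y'\<in>?T. dist y' z < e"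
    by (intro bexI[of _ y]) auto
qed

lemma visc_sub_indicator_closure_Union:
  fixes SS :: "(real^'n) set set"
  assumes az: "\<And>x. 0 < a x"
    and subs: "\<And>G. G \<in> SS \<Longrightarrow> visc_sub a Da F (indicator (closure G))"
  shows "visc_sub a Da F (indicator (closure (\<Union>SS)))"
proof (rule visc_sub_indicator_closedI[OF az closed_closure])
  fix \<eta> :: "real^'n \<Rightarrow> real" and D\<eta> H\<eta> z
  assume C2: "C2_test \<eta> D\<eta> H\<eta>" and z: "z \<in> closure (\<Union>SS)"
    and min: "\<forall>\<^sub>F y in nhds z. y \<in> closure (\<Union>SS) \<longrightarrow> \<eta> z \<le> \<eta> y"
  let ?L = "{(x, p, X). geomG_lower a Da F x p X \<le> 0}"
  \<comment> \<open>Make the minimum strict, so that it survives approximation by minima over the closures of members of SS.\<close>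
  have perturbed: "(z, D\<eta> z, H\<eta> z + (2 * \<epsilon>) *\<^sub>R mat 1) \<in> ?L" if "0 < \<epsilon>" for \<epsilon>
  proof -
    define \<eta>' where "\<eta>' y = \<eta> y + \<epsilon> * ((y - z) \<bullet> (y - z))" for y
    define D\<eta>' where "D\<eta>' y = D\<eta> y + (2 * \<epsilon>) *\<^sub>R (y - z)" for y
    define H\<eta>' where "H\<eta>' y = H\<eta> y + (2 * \<epsilon>) *\<^sub>R (mat 1 :: real^'n^'n)" for y
    have C2': "C2_test \<eta>' D\<eta>' H\<eta>'"
      unfolding \<eta>'_def D\<eta>'_def H\<eta>'_def by (rule C2_test_add_sq_dist[OF C2])
    have "\<forall>\<^sub>F y in nhds z. y \<in> closure (\<Union>SS) \<longrightarrow> \<eta>' z + \<epsilon> * (dist y z)\<^sup>2 \<le> \<eta>' y"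
      using min by (rule eventually_mono) (simp add: \<eta>'_def dist_norm power2_norm_eq_inner)
    from strict_local_min_approx[OF C2_test_continuous(1)[OF C2'] that z this]
    have "z \<in> closure {y. \<exists>G\<in>SS. y \<in> closure G \<and> (\<forall>\<^sub>F w in nhds y. w \<in> closure G \<longrightarrow> \<eta>' y \<le> \<eta>' w)}"
      (is "z \<in> closure ?T") .
    moreover have "(\<lambda>y. (y, D\<eta>' y, H\<eta>' y)) ` closure ?T \<subseteq> ?L"
    proof (rule image_closure_subset[OF _ closed_geomG_lower_le])
      show "continuous_on (closure ?T) (\<lambda>y. (y, D\<eta>' y, H\<eta>' y))"
      proof (rule continuous_on_subset[OF _ subset_UNIV])
        show "continuous_on UNIV (\<lambda>y. (y, D\<eta>' y, H\<eta>' y))"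
          using C2_test_continuous(2,3)[OF C2'] by (simp add: continuous_on_Pair)
      qed
      show "(\<lambda>y. (y, D\<eta>' y, H\<eta>' y)) ` ?T \<subseteq> ?L"
        using visc_sub_indicator_closedD[OF subs C2'] by blast
    qed
    ultimately show ?thesis
      by (auto simp: D\<eta>'_def H\<eta>'_def)
  qed
  have "((\<lambda>\<epsilon>. (z, D\<eta> z, H\<eta> z + (2 * \<epsilon>) *\<^sub>R mat 1)) \<longlongrightarrow> (z, D\<eta> z, H\<eta> z)) (at_right 0)"
    by (auto intro!: tendsto_eq_intros)
  from Lim_in_closed_set[OF closed_geomG_lower_le eventually_mono[OF eventually_at_right_less perturbed] _ this]
  show "geomG_lower a Da F z (D\<eta> z) (H\<eta> z) \<le> 0" by simp
qed

section \<open>The bump construction and Perron's method\<close>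

lemma dist_Pair_le_add: "dist (a, b) (c, d) \<le> dist a c + dist b d"
  unfolding dist_Pair_Pair by (rule sqrt_sum_squares_le_sum) simp_all

lemma geomG_upper_neg_nearby:
  assumes "geomG_upper a Da F x p X < 0"
  obtains e where "0 < e"
    and "\<And>y q Y. y \<noteq> x \<Longrightarrow> q \<noteq> 0 \<Longrightarrow> dist y x < e \<Longrightarrow> dist q p < e \<Longrightarrow> dist Y X < e \<Longrightarrow>
      geomG a Da F y q Y < 0"
proof -
  have "\<forall>\<^sub>F w in at (x, p, X) within {(y, q, Y). q \<noteq> 0}. (\<lambda>(y, q, Y). ereal (geomG a Da F y q Y)) w < 0"
    using Limsup_lessD[OF assms[unfolded geomG_upper_def]] .
  then obtain d where "0 < d" and d: "\<forall>w\<in>{(y, q, Y). q \<noteq> 0}. w \<noteq> (x, p, X) \<and> dist w (x, p, X) < d \<longrightarrow>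
      (\<lambda>(y, q, Y). ereal (geomG a Da F y q Y)) w < 0"
    unfolding eventually_at by blast
  show ?thesis
  proof (rule that[of "d / 3"])
    fix y q Y assume "y \<noteq> x" "q \<noteq> 0" "dist y x < d / 3" "dist q p < d / 3" "dist Y X < d / 3"
    moreover have "dist (y, q, Y) (x, p, X) \<le> dist y x + (dist q p + dist Y X)"
      using dist_Pair_le_add[of y "(q, Y)" x "(p, X)"] dist_Pair_le_add[of q Y p X] by linarith
    ultimately show "geomG a Da F y q Y < 0" using d[rule_format, of "(y, q, Y)"] by simp
  qed (use \<open>0 < d\<close> in simp)
qed

lemma quadratic_function_expansion:
  fixes M :: "real^'n^'n"
  shows "p \<bullet> (z + k - x0) + 1/2 * ((z + k - x0) \<bullet> (M *v (z + k - x0))) =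
    p \<bullet> (z - x0) + 1/2 * ((z - x0) \<bullet> (M *v (z - x0)))
    + (p + ((1/2) *\<^sub>R (M + transpose M)) *v (z - x0)) \<bullet> k + 1/2 * (k \<bullet> (M *v k))"
proof -
  define h where "h = z - x0"
  have "z + k - x0 = h + k" by (simp add: h_def algebra_simps)
  moreover have "(transpose M *v h) \<bullet> k = h \<bullet> (M *v k)" by (simp add: dot_lmul_matrix)
  ultimately show ?thesis unfolding h_def[symmetric]
    by (simp add: algebra_simps inner_commute[of "M *v h" k] scaleR_matrix_vector_assoc[symmetric]
        del: transpose_matrix_vector)
qed

lemma inner_symmetric_part:
  fixes M :: "real^'n^'n"
  shows "h \<bullet> (((1/2) *\<^sub>R (M + transpose M)) *v h) = h \<bullet> (M *v h)"
proof -
  have "h \<bullet> (transpose M *v h) = h \<bullet> (M *v h)"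
    by (simp add: inner_commute[of h "h v* M"] dot_lmul_matrix)
  then show ?thesis
    by (simp add: matrix_vector_mult_add_rdistrib inner_add_right scaleR_matrix_vector_assoc[symmetric]
        del: transpose_matrix_vector)
qed

lemma quadratic_barrier_off_set:
  fixes \<phi> :: "real^'n \<Rightarrow> real"
  assumes C2: "C2_test \<phi> D\<phi> H\<phi>" and "0 < \<kappa>"
    and touch: "\<forall>\<^sub>F y in nhds x0. y \<notin> E \<longrightarrow> \<phi> y \<le> \<phi> x0"
  shows "\<forall>\<^sub>F y in nhds x0. y \<notin> E \<longrightarrow>
    D\<phi> x0 \<bullet> (y - x0) + 1/2 * ((y - x0) \<bullet> ((H\<phi> x0 - \<kappa> *\<^sub>R mat 1) *v (y - x0))) \<le> - (\<kappa> / 4) * (norm (y - x0))\<^sup>2"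
proof -
  have "0 < \<kappa> / 4" using \<open>0 < \<kappa>\<close> by simp
  from touch C2_test_taylor2[OF C2 this, of x0] show ?thesis
  proof eventually_elim
    case (elim y)
    have "(y - x0) \<bullet> ((H\<phi> x0 - \<kappa> *\<^sub>R mat 1) *v (y - x0)) =
        (y - x0) \<bullet> (H\<phi> x0 *v (y - x0)) - \<kappa> * (norm (y - x0))\<^sup>2"
      by (simp add: matrix_vector_mult_diff_rdistrib inner_diff_right scaleR_matrix_vector_assoc[symmetric]
          power2_norm_eq_inner)
    with elim show ?case unfolding abs_le_iff by linarith
  qed
qed

lemma quadratic_gradient_nonzero:
  fixes M Ms :: "real^'n^'n"
  assumes sym: "h \<bullet> (Ms *v h) = h \<bullet> (M *v h)"
    and K: "norm (Ms *v h) \<le> norm h * K" and "norm h < r" and "0 \<le> K"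
    and small: "p \<noteq> 0 \<Longrightarrow> r * K < norm p"
    and level: "p \<bullet> h + 1/2 * (h \<bullet> (M *v h)) \<noteq> 0"
  shows "p + Ms *v h \<noteq> 0"
proof
  assume "p + Ms *v h = 0"
  then have Ms_h: "Ms *v h = - p" by (simp add: eq_neg_iff_add_eq_0 add.commute)
  show False
  proof (cases "p = 0")
    case True
    then have "h \<bullet> (M *v h) = 0" using sym Ms_h by simp
    with level True show False by simp
  next
    case False
    have "norm h * K \<le> r * K" using \<open>norm h < r\<close> \<open>0 \<le> K\<close> by (simp add: mult_right_mono)
    with K Ms_h small[OF False] show False by simp
  qed
qed

lemma geomG_lower_nonpos_min_on_superlevel:
  fixes q :: "real^'n \<Rightarrow> real" and M :: "real^'n^'n"
  assumes C2: "C2_test \<eta> D\<eta> H\<eta>" and az: "0 < a z"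
    and q: "\<And>k. q (z + k) = q z + Dq z \<bullet> k + 1/2 * (k \<bullet> (M *v k))"
    and qcont: "continuous_on UNIV q" and "c \<le> q z"
    and level: "q z = c \<Longrightarrow> Dq z \<noteq> 0 \<and> geomG a Da F z (Dq z) M \<le> 0"
    and min: "\<forall>\<^sub>F y in nhds z. c < q y \<longrightarrow> \<eta> z \<le> \<eta> y"
  shows "geomG_lower a Da F z (D\<eta> z) (H\<eta> z) \<le> 0"
proof (cases "c < q z")
  case True
  have "\<forall>\<^sub>F y in nhds z. c < q y"
    using eventually_nhds_in_open[OF open_Collect_less[OF continuous_on_const qcont]] True by simp
  with min have "\<forall>\<^sub>F y in nhds z. \<eta> z \<le> \<eta> y"
    by eventually_elim simp
  then show ?thesis by (rule geomG_lower_nonpos_local_min[where a = a and z = z, OF C2 az])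
next
  case False
  with \<open>c \<le> q z\<close> level have "q z = c" "Dq z \<noteq> 0" "geomG a Da F z (Dq z) M \<le> 0" by auto
  with min show ?thesis
    using geomG_lower_nonpos_superlevel_min[where a = a and z = z and q = q and P = "Dq z" and M = M,
        OF C2 _ az q]
    by simp
qed

lemma visc_sub_indicator_closure_Un_superlevel:
  fixes q :: "real^'n \<Rightarrow> real" and Dq :: "real^'n \<Rightarrow> real^'n" and M :: "real^'n^'n"
  assumes az: "\<And>x. 0 < a x"
    and subE: "visc_sub a Da F (indicator (closure E))"
    and q: "\<And>z k. q (z + k) = q z + Dq z \<bullet> k + 1/2 * (k \<bullet> (M *v k))"
    and qcont: "continuous_on UNIV q" and "open U"
    and border: "\<And>z. z \<in> closure (U \<inter> {y. c < q y}) \<Longrightarrow> z \<notin> closure E \<Longrightarrow>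
      z \<in> U \<and> (q z = c \<longrightarrow> Dq z \<noteq> 0 \<and> geomG a Da F z (Dq z) M \<le> 0)"
  shows "visc_sub a Da F (indicator (closure (E \<union> (U \<inter> {y. c < q y}))))"
proof (rule visc_sub_indicator_closedI[OF az closed_closure])
  let ?B = "U \<inter> {y. c < q y}"
  fix \<eta> :: "real^'n \<Rightarrow> real" and D\<eta> H\<eta> z
  assume C2: "C2_test \<eta> D\<eta> H\<eta>" and z: "z \<in> closure (E \<union> ?B)"
    and min: "\<forall>\<^sub>F y in nhds z. y \<in> closure (E \<union> ?B) \<longrightarrow> \<eta> z \<le> \<eta> y"
  show "geomG_lower a Da F z (D\<eta> z) (H\<eta> z) \<le> 0"
  proof (cases "z \<in> closure E")
    case True
    from min have "\<forall>\<^sub>F y in nhds z. y \<in> closure E \<longrightarrow> \<eta> z \<le> \<eta> y"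
      by (rule eventually_mono) (use closure_mono[of E "E \<union> ?B"] in blast)
    then show ?thesis by (rule visc_sub_indicator_closedD[OF subE C2 True])
  next
    case False
    then have zB: "z \<in> closure ?B" using z by simp
    have "closure ?B \<subseteq> {y. c \<le> q y}"
      by (intro closure_minimal closed_Collect_le[OF continuous_on_const qcont]) auto
    with zB have "c \<le> q z" by auto
    from border[OF zB False] have "z \<in> U" and level: "q z = c \<longrightarrow> Dq z \<noteq> 0 \<and> geomG a Da F z (Dq z) M \<le> 0"
      by auto
    have "\<forall>\<^sub>F y in nhds z. y \<in> U" using \<open>open U\<close> \<open>z \<in> U\<close> by (rule eventually_nhds_in_open)
    with min have "\<forall>\<^sub>F y in nhds z. c < q y \<longrightarrow> \<eta> z \<le> \<eta> y"
      by eventually_elim (use closure_subset[of "E \<union> ?B"] in auto)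
    with level show ?thesis
      by (intro geomG_lower_nonpos_min_on_superlevel[where a = a and z = z and q = q and Dq = Dq and M = M,
            OF C2 az q qcont \<open>c \<le> q z\<close>]) auto
  qed
qed

lemma eventually_at_right_cball:
  fixes x0 :: "'a::metric_space"
  assumes "\<forall>\<^sub>F y in nhds x0. P y"
  shows "\<forall>\<^sub>F r in at_right 0. \<forall>y. dist y x0 \<le> r \<longrightarrow> P y"
proof -
  obtain d where "0 < d" "\<And>y. dist y x0 \<le> d \<Longrightarrow> P y"
    using assms unfolding eventually_nhds_metric_le by blast
  then show ?thesis
    unfolding eventually_at_right_field by (intro exI[of _ d]) auto
qed

lemma eventually_geomG_neg_on_paraboloid_levels:
  fixes p x0 :: "real^'n" and M :: "real^'n^'n"
  assumes "0 < e"
    and G_neg: "\<forall>y P. y \<noteq> x0 \<longrightarrow> P \<noteq> 0 \<longrightarrow> dist y x0 < e \<longrightarrow> dist P p < e \<longrightarrow> geomG a Da F y P M < 0"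
  shows "\<forall>\<^sub>F r in at_right 0. \<forall>z. dist z x0 < r \<longrightarrow> p \<bullet> (z - x0) + 1/2 * ((z - x0) \<bullet> (M *v (z - x0))) \<noteq> 0 \<longrightarrow>
    p + ((1/2) *\<^sub>R (M + transpose M)) *v (z - x0) \<noteq> 0 \<and>
    geomG a Da F z (p + ((1/2) *\<^sub>R (M + transpose M)) *v (z - x0)) M < 0"
proof -
  define Ms where "Ms = (1/2) *\<^sub>R (M + transpose M)"
  obtain K where "0 < K" and K: "\<And>h. norm (Ms *v h) \<le> norm h * K"
    using bounded_linear.pos_bounded[OF matrix_vector_mul_bounded_linear[of Ms]] by blast
  have lim: "((\<lambda>r. r) \<longlongrightarrow> 0) (at_right 0)" "((\<lambda>r. r * K) \<longlongrightarrow> 0) (at_right (0::real))"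
    by (auto intro!: tendsto_eq_intros)
  define m where "m = (if p = 0 then e else min e (norm p))"
  have "0 < m" using \<open>0 < e\<close> by (simp add: m_def)
  have "\<forall>\<^sub>F r in at_right 0. r < e \<and> r * K < m"
    using order_tendstoD(2)[OF lim(1) \<open>0 < e\<close>] order_tendstoD(2)[OF lim(2) \<open>0 < m\<close>]
    by eventually_elim simp
  then have "\<forall>\<^sub>F r in at_right 0. r < e \<and> r * K < e \<and> (p \<noteq> 0 \<longrightarrow> r * K < norm p)"
    by (rule eventually_mono) (auto simp: m_def split: if_splits)
  then show ?thesis
    unfolding Ms_def[symmetric]
  proof (rule eventually_mono, intro allI impI conjI)
    fix r z
    assume r: "r < e \<and> r * K < e \<and> (p \<noteq> 0 \<longrightarrow> r * K < norm p)" and "dist z x0 < r"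
      and level: "p \<bullet> (z - x0) + 1/2 * ((z - x0) \<bullet> (M *v (z - x0))) \<noteq> 0"
    have "norm (z - x0) < r" using \<open>dist z x0 < r\<close> by (simp add: dist_norm)
    show "p + Ms *v (z - x0) \<noteq> 0"
    proof (rule quadratic_gradient_nonzero[OF _ K \<open>norm (z - x0) < r\<close> _ _ level])
      show "(z - x0) \<bullet> (Ms *v (z - x0)) = (z - x0) \<bullet> (M *v (z - x0))"
        unfolding Ms_def by (rule inner_symmetric_part)
    qed (use r \<open>0 < K\<close> in auto)
    moreover have "dist (p + Ms *v (z - x0)) p < e"
    proof -
      have "norm (z - x0) * K \<le> r * K"
        using \<open>norm (z - x0) < r\<close> \<open>0 < K\<close> by simp
      then show ?thesis using K[of "z - x0"] r by (simp add: dist_norm)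
    qed
    moreover from level have "z \<noteq> x0" by (rule contrapos_nn) simp
    ultimately show "geomG a Da F z (p + Ms *v (z - x0)) M < 0"
      using G_neg \<open>dist z x0 < r\<close> r by simp
  qed
qed

lemma visc_sub_indicator_closure_Un_ball_superlevel:
  fixes q :: "real^'n \<Rightarrow> real" and Dq :: "real^'n \<Rightarrow> real^'n" and M :: "real^'n^'n"
  assumes az: "\<And>x. 0 < a x"
    and subE: "visc_sub a Da F (indicator (closure E))"
    and q: "\<And>z k. q (z + k) = q z + Dq z \<bullet> k + 1/2 * (k \<bullet> (M *v k))"
    and qcont: "continuous_on UNIV q" and "0 < \<kappa>" and "0 < r"
    and barrier: "\<And>y. dist y x0 \<le> r \<Longrightarrow> y \<notin> E \<Longrightarrow> q y \<le> - (\<kappa> / 4) * (norm (y - x0))\<^sup>2"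
    and level: "\<And>z. dist z x0 < r \<Longrightarrow> q z = - (\<kappa> * r\<^sup>2 / 8) \<Longrightarrow> Dq z \<noteq> 0 \<and> geomG a Da F z (Dq z) M \<le> 0"
  shows "visc_sub a Da F (indicator (closure (E \<union> (ball x0 r \<inter> {y. - (\<kappa> * r\<^sup>2 / 8) < q y}))))"
proof (rule visc_sub_indicator_closure_Un_superlevel[OF az subE q qcont open_ball])
  fix z assume z: "z \<in> closure (ball x0 r \<inter> {y. - (\<kappa> * r\<^sup>2 / 8) < q y})" "z \<notin> closure E"
  have "closure (ball x0 r \<inter> {y. - (\<kappa> * r\<^sup>2 / 8) < q y}) \<subseteq> cball x0 r \<inter> {y. - (\<kappa> * r\<^sup>2 / 8) \<le> q y}"
    by (intro closure_minimal closed_Int closed_cball closed_Collect_le[OF continuous_on_const qcont]) auto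
  with z have "dist z x0 \<le> r" "- (\<kappa> * r\<^sup>2 / 8) \<le> q z" by (auto simp: dist_commute)
  moreover have "z \<notin> E" using z closure_subset by blast
  ultimately have "\<kappa> * (norm (z - x0))\<^sup>2 \<le> \<kappa> * (r\<^sup>2 / 2)"
    using barrier[of z] by linarith
  then have "(norm (z - x0))\<^sup>2 \<le> r\<^sup>2 / 2"
    using \<open>0 < \<kappa>\<close> by simp
  moreover have "0 < r\<^sup>2" using \<open>0 < r\<close> by simp
  ultimately have "(norm (z - x0))\<^sup>2 < r\<^sup>2" by linarith
  then have "dist z x0 < r"
    using \<open>0 < r\<close> by (simp add: dist_norm power2_less_imp_less)
  with level show "z \<in> ball x0 r \<and> (q z = - (\<kappa> * r\<^sup>2 / 8) \<longrightarrow> Dq z \<noteq> 0 \<and> geomG a Da F z (Dq z) M \<le> 0)"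
    by (simp add: dist_commute)
qed

lemma continuous_on_quadratic:
  fixes M :: "real^'n^'n"
  shows "continuous_on UNIV (\<lambda>y. p \<bullet> (y - x0) + 1/2 * ((y - x0) \<bullet> (M *v (y - x0))))"
proof -
  have "continuous_on UNIV (\<lambda>y. M *v (y - x0))"
    by (rule bounded_linear.continuous_on[OF matrix_vector_mul_bounded_linear]) (intro continuous_intros)
  then show ?thesis by (intro continuous_intros) auto
qed

lemma visc_sub_indicator_closure_Un_paraboloid:
  fixes E V :: "(real^'n) set" and M :: "real^'n^'n"
  assumes az: "\<And>x. 0 < a x"
    and subE: "visc_sub a Da F (indicator (closure E))"
    and "0 < \<kappa>" and "0 < e" and "open V" and "x0 \<in> V"
    and barrier: "\<forall>\<^sub>F y in nhds x0. y \<notin> E \<longrightarrow>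
      p \<bullet> (y - x0) + 1/2 * ((y - x0) \<bullet> (M *v (y - x0))) \<le> - (\<kappa> / 4) * (norm (y - x0))\<^sup>2"
    and G_neg: "\<forall>y P. y \<noteq> x0 \<longrightarrow> P \<noteq> 0 \<longrightarrow> dist y x0 < e \<longrightarrow> dist P p < e \<longrightarrow> geomG a Da F y P M < 0"
  shows "\<exists>B. open B \<and> x0 \<in> B \<and> B \<subseteq> V \<and> visc_sub a Da F (indicator (closure (E \<union> B)))"
proof -
  define Dq where "Dq z = p + ((1/2) *\<^sub>R (M + transpose M)) *v (z - x0)" for z
  define q where "q y = p \<bullet> (y - x0) + 1/2 * ((y - x0) \<bullet> (M *v (y - x0)))" for y
  have "\<forall>\<^sub>F r in at_right 0. (\<forall>y. dist y x0 \<le> r \<longrightarrow> y \<in> V) \<and>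
      (\<forall>y. dist y x0 \<le> r \<longrightarrow> y \<notin> E \<longrightarrow> q y \<le> - (\<kappa> / 4) * (norm (y - x0))\<^sup>2) \<and>
      (\<forall>z. dist z x0 < r \<longrightarrow> q z \<noteq> 0 \<longrightarrow> Dq z \<noteq> 0 \<and> geomG a Da F z (Dq z) M < 0) \<and> 0 < r"
    using eventually_at_right_cball[OF eventually_nhds_in_open[OF \<open>open V\<close> \<open>x0 \<in> V\<close>]]
      eventually_at_right_cball[OF barrier] eventually_geomG_neg_on_paraboloid_levels[OF \<open>0 < e\<close> G_neg]
      eventually_at_right_less[of "0::real"]
    by eventually_elim (simp add: q_def Dq_def)
  then obtain r where "0 < r" and r_V: "\<And>y. dist y x0 \<le> r \<Longrightarrow> y \<in> V"
    and barrier: "\<And>y. dist y x0 \<le> r \<Longrightarrow> y \<notin> E \<Longrightarrow> q y \<le> - (\<kappa> / 4) * (norm (y - x0))\<^sup>2"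
    and level: "\<And>z. dist z x0 < r \<Longrightarrow> q z \<noteq> 0 \<Longrightarrow> Dq z \<noteq> 0 \<and> geomG a Da F z (Dq z) M < 0"
    using eventually_happens'[OF trivial_limit_at_right_real] by blast
  have q_expand: "q (z + k) = q z + Dq z \<bullet> k + 1/2 * (k \<bullet> (M *v k))" for z k
    unfolding q_def Dq_def by (rule quadratic_function_expansion)
  have qcont: "continuous_on UNIV q"
    unfolding q_def[abs_def] by (rule continuous_on_quadratic)
  have "0 < \<kappa> * r\<^sup>2 / 8" using \<open>0 < \<kappa>\<close> \<open>0 < r\<close> by simp
  show ?thesis
  proof (intro exI conjI)
    show "open (ball x0 r \<inter> {y. - (\<kappa> * r\<^sup>2 / 8) < q y})"
      by (intro open_Int open_ball open_Collect_less[OF continuous_on_const qcont])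
    show "x0 \<in> ball x0 r \<inter> {y. - (\<kappa> * r\<^sup>2 / 8) < q y}"
      using \<open>0 < r\<close> \<open>0 < \<kappa> * r\<^sup>2 / 8\<close> by (simp add: q_def)
    show "ball x0 r \<inter> {y. - (\<kappa> * r\<^sup>2 / 8) < q y} \<subseteq> V"
      using r_V by (auto simp: dist_commute)
    show "visc_sub a Da F (indicator (closure (E \<union> (ball x0 r \<inter> {y. - (\<kappa> * r\<^sup>2 / 8) < q y}))))"
      using level \<open>0 < \<kappa> * r\<^sup>2 / 8\<close>
      by (intro visc_sub_indicator_closure_Un_ball_superlevel[where q = q and Dq = Dq,
            OF az subE q_expand qcont \<open>0 < \<kappa>\<close> \<open>0 < r\<close> barrier]) fastforce+
  qed
qed

lemma visc_sub_indicator_closure_Un_bump: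
  fixes E V :: "(real^'n) set" and \<phi> :: "real^'n \<Rightarrow> real"
  assumes az: "\<And>x. 0 < a x"
    and subE: "visc_sub a Da F (indicator (closure E))"
    and C2: "C2_test \<phi> D\<phi> H\<phi>"
    and touch: "\<forall>\<^sub>F y in nhds x0. y \<notin> E \<longrightarrow> \<phi> y \<le> \<phi> x0"
    and neg: "geomG_upper a Da F x0 (D\<phi> x0) (H\<phi> x0) < 0"
    and "open V" and "x0 \<in> V"
  shows "\<exists>B. open B \<and> x0 \<in> B \<and> B \<subseteq> V \<and> visc_sub a Da F (indicator (closure (E \<union> B)))"
proof -
  obtain e where "0 < e" and G_neg: "\<And>y P Y. y \<noteq> x0 \<Longrightarrow> P \<noteq> 0 \<Longrightarrow> dist y x0 < e \<Longrightarrow>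
      dist P (D\<phi> x0) < e \<Longrightarrow> dist Y (H\<phi> x0) < e \<Longrightarrow> geomG a Da F y P Y < 0"
    using geomG_upper_neg_nearby[OF neg] by blast
  \<comment> \<open>Lower the Hessian of the test function by \<kappa> I, little enough to stay in the region where geomG < 0.\<close>
  define \<kappa> where "\<kappa> = e / (norm (mat 1 :: real^'n^'n) + 1)"
  have "0 < norm (mat 1 :: real^'n^'n) + 1" by (simp add: add_nonneg_pos)
  then have "0 < \<kappa>" and "\<kappa> * (norm (mat 1 :: real^'n^'n) + 1) = e"
    using \<open>0 < e\<close> by (simp_all add: \<kappa>_def)
  then have "dist (H\<phi> x0 - \<kappa> *\<^sub>R mat 1) (H\<phi> x0) < e"
    by (simp add: dist_norm distrib_left)
  with G_neg show ?thesis
    by (intro visc_sub_indicator_closure_Un_paraboloid[OF az subE \<open>0 < \<kappa>\<close> \<open>0 < e\<close> \<open>open V\<close> \<open>x0 \<in> V\<close>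
          quadratic_barrier_off_set[OF C2 \<open>0 < \<kappa>\<close> touch]]) blast
qed

lemma visc_super_indicator_of_maximal:
  fixes E Eup :: "(real^'n) set"
  assumes az: "\<And>x. 0 < a x" and "open E" and "E \<subseteq> Eup" and "open Eup"
    and super: "visc_super a Da F (indicator Eup)"
    and subE: "visc_sub a Da F (indicator (closure E))"
    and maximal: "\<And>B. open B \<Longrightarrow> B \<subseteq> Eup \<Longrightarrow> visc_sub a Da F (indicator (closure (E \<union> B))) \<Longrightarrow> B \<subseteq> E"
  shows "visc_super a Da F (indicator E)"
proof -
  have "0 \<le> geomG_upper a Da F x0 (D\<phi> x0) (H\<phi> x0)"
    if C2: "C2_test \<phi> D\<phi> H\<phi>" and min: "\<forall>\<^sub>F y in nhds x0. indicator E x0 - \<phi> x0 \<le> indicator E y - \<phi> y"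
    for \<phi> :: "real^'n \<Rightarrow> real" and D\<phi> H\<phi> x0
  proof (cases "x0 \<in> E \<or> x0 \<notin> Eup")
    case True
    have le: "indicator E y \<le> (indicator Eup y :: real)" for y
      using \<open>E \<subseteq> Eup\<close> by (auto simp: indicator_def)
    have eq: "indicator Eup x0 = (indicator E x0 :: real)"
      using True \<open>E \<subseteq> Eup\<close> by (auto simp: indicator_def)
    from min have "\<forall>\<^sub>F y in nhds x0. indicator Eup x0 - \<phi> x0 \<le> indicator Eup y - \<phi> y"
    proof (rule eventually_mono)
      fix y assume "indicator E x0 - \<phi> x0 \<le> indicator E y - \<phi> y"
      with le[of y] eq show "indicator Eup x0 - \<phi> x0 \<le> indicator Eup y - \<phi> y" by linarith
    qed
    with super C2 show ?thesis
      unfolding visc_super_def eventually_nhds_iff_ball by blast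
  next
    case False
    show ?thesis
    proof (rule ccontr)
      assume "\<not> ?thesis"
      moreover have "\<forall>\<^sub>F y in nhds x0. y \<notin> E \<longrightarrow> \<phi> y \<le> \<phi> x0"
        using min by (rule eventually_mono) (use False in auto)
      ultimately obtain B where "open B" "x0 \<in> B" "B \<subseteq> Eup" "visc_sub a Da F (indicator (closure (E \<union> B)))"
        using visc_sub_indicator_closure_Un_bump[OF az subE C2 _ _ \<open>open Eup\<close>] False by force
      with maximal False show False by blast
    qed
  qed
  then show ?thesis
    unfolding visc_super_def eventually_nhds_iff_ball[symmetric]
    using lsc_indicator_open[OF \<open>open E\<close>] by blast
qed

theorem propositionA1:
  fixes a :: "real^'n \<Rightarrow> real" and Da :: "real^'n \<Rightarrow> real^'n"
    and \<Lambda> F :: real and Eup Elow :: "(real^'n) set"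
  assumes d: "CARD('n) \<ge> 2"
    and Lam: "\<Lambda> > 1"
    and a_per: "Zd_periodic a"
    and a_C1: "\<forall>x. (a has_derivative (\<lambda>h. Da x \<bullet> h)) (at x)" "continuous_on UNIV Da"
    and a_range: "\<forall>x. 1 \<le> a x \<and> a x \<le> \<Lambda>"
    and opens: "open Eup" "open Elow"
    and incl: "closure Elow \<subseteq> Eup"
    and regular: "closure (- closure Eup) = - Eup"
    and super: "visc_super a Da F (indicator Eup)"
    and sub: "visc_sub a Da F (indicator (closure Elow))"
  shows "\<exists>E. open E \<and> Elow \<subseteq> E \<and> E \<subseteq> Eup \<and> visc_solution_disc a Da F (indicator E)"
proof -
  have az: "\<And>x. 0 < a x" using a_range by (meson less_le_trans zero_less_one)
  define SS where "SS = {G. open G \<and> Elow \<subseteq> G \<and> G \<subseteq> Eup \<and> visc_sub a Da F (indicator (closure G))}"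
  define E where "E = \<Union>SS"
  have "Elow \<in> SS" using opens incl closure_subset sub by (auto simp: SS_def)
  then have "open E" "Elow \<subseteq> E" "E \<subseteq> Eup" by (auto simp: E_def SS_def)
  have subE: "visc_sub a Da F (indicator (closure E))"
    unfolding E_def by (rule visc_sub_indicator_closure_Union[OF az]) (simp add: SS_def)
  have "visc_super a Da F (indicator E)"
  proof (rule visc_super_indicator_of_maximal[OF az \<open>open E\<close> \<open>E \<subseteq> Eup\<close> opens(1) super subE])
    fix B assume "open B" "B \<subseteq> Eup" "visc_sub a Da F (indicator (closure (E \<union> B)))"
    then have "E \<union> B \<in> SS" using \<open>open E\<close> \<open>Elow \<subseteq> E\<close> \<open>E \<subseteq> Eup\<close> by (auto simp: SS_def)
    then show "B \<subseteq> E" by (auto simp: E_def)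
  qed
  with subE have "visc_solution_disc a Da F (indicator E)"
    unfolding visc_solution_disc_def usc_env_indicator lsc_env_indicator_open[OF \<open>open E\<close>] by blast
  with \<open>open E\<close> \<open>Elow \<subseteq> E\<close> \<open>E \<subseteq> Eup\<close> show ?thesis by blast
qed

end
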